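(* The Riemannian manifold $(\Theta,g)$, i.e. the space of beta distributions equipped with the Fisher information metric, has strictly negative sectional curvature at every point $(x,y)\in\Theta$.
   Context: For $x,y>0$ the beta distribution $B(x,y)$ is the probability measure on $[0,1]$ with Lebesgue density $p(t;x,y)=\frac{\Gamma(x+y)}{\Gamma(x)\Gamma(y)}t^{x-1}(1-t)^{y-1}$. Let $\psi(x)=\frac{d}{dx}\ln\Gamma(x)$ be the digamma function. The Fisher information metric on the parameter space $\Theta=(0,\infty)^2$ is the Riemannian metric $g_{(x,y)}(u,v)=u^tI(x,y)v$, where \[ I(x,y)=\begin{pmatrix}\psi'(x)-\psi'(x+y) & -\psi'(x+y)\\ -\psi'(x+y) & \psi'(y)-\psi'(x+y)\end{pmatrix}. \] *)

theory Defs
  imports "HOL-Analysis.Analysis"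
begin

text \<open>Points of the parameter space and tangent vectors are pairs of reals;
coordinate indices are 0 (for x) and 1 (for y).\<close>

definition comp :: "nat \<Rightarrow> real \<times> real \<Rightarrow> real" where
  "comp k p = (if k = 0 then fst p else snd p)"

definition shift :: "nat \<Rightarrow> real \<Rightarrow> real \<times> real \<Rightarrow> real \<times> real" where
  "shift k t p = (if k = 0 then (fst p + t, snd p) else (fst p, snd p + t))"

definition pd :: "nat \<Rightarrow> (real \<times> real \<Rightarrow> real) \<Rightarrow> real \<times> real \<Rightarrow> real" where
  "pd k f p = deriv (\<lambda>t. f (shift k t p)) 0"

text \<open>Fisher information matrix of the beta family, psi' = trigamma = Polygamma 1.\<close>
definition fisher :: "nat \<Rightarrow> nat \<Rightarrow> real \<times> real \<Rightarrow> real" where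
  "fisher i j p = (let x = fst p; y = snd p in
     if i = 0 \<and> j = 0 then Polygamma 1 x - Polygamma 1 (x + y)
     else if i = 1 \<and> j = 1 then Polygamma 1 y - Polygamma 1 (x + y)
     else - Polygamma 1 (x + y))"

definition fisher_det :: "real \<times> real \<Rightarrow> real" where
  "fisher_det p = fisher 0 0 p * fisher 1 1 p - fisher 0 1 p * fisher 1 0 p"

definition fisher_inv :: "nat \<Rightarrow> nat \<Rightarrow> real \<times> real \<Rightarrow> real" where
  "fisher_inv i j p =
     (if i = 0 \<and> j = 0 then fisher 1 1 p / fisher_det p
      else if i = 1 \<and> j = 1 then fisher 0 0 p / fisher_det p
      else - fisher i j p / fisher_det p)"

definition christ1 :: "nat \<Rightarrow> nat \<Rightarrow> nat \<Rightarrow> real \<times> real \<Rightarrow> real" where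
  "christ1 i j k p = (pd i (fisher j k) p + pd j (fisher i k) p - pd k (fisher i j) p) / 2"

definition christ2 :: "nat \<Rightarrow> nat \<Rightarrow> nat \<Rightarrow> real \<times> real \<Rightarrow> real" where
  "christ2 k i j p = (\<Sum>l<2. fisher_inv k l p * christ1 i j l p)"

text \<open>Riemann tensor components R^l_{ijk}, defined by
 R(d_i,d_j) d_k = nabla_i nabla_j d_k - nabla_j nabla_i d_k = sum_l R^l_{ijk} d_l.\<close>
definition riem :: "nat \<Rightarrow> nat \<Rightarrow> nat \<Rightarrow> nat \<Rightarrow> real \<times> real \<Rightarrow> real" where
  "riem l i j k p = pd i (christ2 l j k) p - pd j (christ2 l i k) p
     + (\<Sum>m<2. christ2 l i m p * christ2 m j k p - christ2 l j m p * christ2 m i k p)"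

definition fisher_g :: "real \<times> real \<Rightarrow> real \<times> real \<Rightarrow> real \<times> real \<Rightarrow> real" where
  "fisher_g p u v = (\<Sum>i<2. \<Sum>j<2. comp i u * fisher i j p * comp j v)"

definition riem4 :: "real \<times> real \<Rightarrow> real \<times> real \<Rightarrow> real \<times> real \<Rightarrow> real" where
  "riem4 p u v = (\<Sum>i<2. \<Sum>j<2. \<Sum>k<2. \<Sum>l<2. \<Sum>m<2.
      comp i u * comp j v * comp k v * riem l i j k p * fisher l m p * comp m u)"

definition sectional_curvature :: "real \<times> real \<Rightarrow> real \<times> real \<Rightarrow> real \<times> real \<Rightarrow> real" where
  "sectional_curvature p u v =
     riem4 p u v / (fisher_g p u u * fisher_g p v v - (fisher_g p u v)\<^sup>2)"

end

theory Submission
  imports Defs "HOL-Real_Asymp.Real_Asymp"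
begin

text \<open>
  The Fisher metric is the Hessian of \<open>ln B(x, y) = ln \<Gamma> x + ln \<Gamma> y - ln \<Gamma> (x + y)\<close>, so its
  Christoffel symbols are built from third derivatives of \<open>ln B\<close>, and in dimension two the
  sectional curvature comes out as \<open>K = - D\<^sub>3 / (4 (det g)\<^sup>2)\<close>, where \<open>D\<^sub>3\<close> is a \<open>3 \<times> 3\<close>
  determinant of second and third derivatives (the fourth derivatives cancel).
  Positivity of \<open>det g\<close> says that \<open>1 / \<psi>'\<close> is strictly superadditive, positivity of \<open>D\<^sub>3\<close> that
  \<open>- \<psi>' / \<psi>''\<close> is; both follow from the monotonicity of \<open>t \<psi>'(t)\<close> and of \<open>t \<psi>''(t) / \<psi>'(t)\<close>.
  These are inequalities between the series \<open>\<Sum>k. (t + k)\<^sup>-\<^sup>n\<close>, proved by telescoping: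
  a function vanishing at infinity whose differences \<open>\<Phi> t - \<Phi> (t + 1)\<close> are positive is
  positive, which turns each inequality into a rational one.
\<close>

section \<open>Hurwitz zeta values\<close>

definition hurwitz :: "nat \<Rightarrow> real \<Rightarrow> real" where
  "hurwitz n t = (\<Sum>k. 1 / (t + real k) ^ n)"

lemma summable_hurwitz: "t > 0 \<Longrightarrow> n \<ge> 2 \<Longrightarrow> summable (\<lambda>k. 1 / (t + real k) ^ n)"
  using Polygamma_converges'[of t n] by (simp add: inverse_eq_divide)

lemma hurwitz_shift:
  assumes "t > 0" "n \<ge> 2"
  shows "hurwitz n t = 1 / t ^ n + hurwitz n (t + 1)"
  using suminf_split_head[OF summable_hurwitz[OF assms]]
  by (simp add: hurwitz_def algebra_simps)

lemma hurwitz_shift_tendsto_zero: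
  assumes "t > 0" "n \<ge> 2"
  shows "(\<lambda>m. hurwitz n (t + real m)) \<longlonglongrightarrow> 0"
  using suminf_exist_split2[OF summable_hurwitz[OF assms]]
  by (simp add: hurwitz_def algebra_simps)

lemma hurwitz_pos: "t > 0 \<Longrightarrow> n \<ge> 2 \<Longrightarrow> hurwitz n t > 0"
  unfolding hurwitz_def by (intro suminf_pos summable_hurwitz) auto

lemma nonneg_if_shift_decreasing:
  fixes \<Phi> :: "real \<Rightarrow> real"
  assumes "t > 0"
    and lim: "\<And>s. s > 0 \<Longrightarrow> (\<lambda>m. \<Phi> (s + real m)) \<longlonglongrightarrow> 0"
    and dec: "\<And>s. s > 0 \<Longrightarrow> \<Phi> (s + 1) \<le> \<Phi> s"
  shows "\<Phi> t \<ge> 0"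
proof -
  have "\<Phi> (t + real m) \<le> \<Phi> t" for m
  proof (induction m)
    case (Suc m)
    have "\<Phi> (t + real (Suc m)) \<le> \<Phi> (t + real m)"
      using dec[of "t + real m"] \<open>t > 0\<close> by (simp add: algebra_simps)
    with Suc show ?case by simp
  qed simp
  then show ?thesis
    using LIMSEQ_le_const2[OF lim[OF \<open>t > 0\<close>]] by blast
qed

lemma pos_if_shift_strictly_decreasing:
  fixes \<Phi> :: "real \<Rightarrow> real"
  assumes "t > 0"
    and "\<And>s. s > 0 \<Longrightarrow> (\<lambda>m. \<Phi> (s + real m)) \<longlonglongrightarrow> 0"
    and dec: "\<And>s. s > 0 \<Longrightarrow> \<Phi> (s + 1) < \<Phi> s"
  shows "\<Phi> t > 0"
proof -
  have "\<Phi> (t + 1) \<ge> 0"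
    using assms by (intro nonneg_if_shift_decreasing) (auto intro: less_imp_le)
  with dec[OF \<open>t > 0\<close>] show ?thesis by simp
qed

lemma hurwitz_lower_bound:
  assumes "t > 0" "n \<ge> 2"
    and lim: "\<And>s. s > 0 \<Longrightarrow> (\<lambda>m. L (s + real m)) \<longlonglongrightarrow> 0"
    and step: "\<And>s. s > 0 \<Longrightarrow> L s - L (s + 1) \<le> 1 / s ^ n"
  shows "L t \<le> hurwitz n t"
proof -
  have "hurwitz n t - L t \<ge> 0"
  proof (rule nonneg_if_shift_decreasing[where \<Phi> = "\<lambda>s. hurwitz n s - L s", OF \<open>t > 0\<close>])
    fix s :: real assume s: "s > 0"
    show "(\<lambda>m. hurwitz n (s + real m) - L (s + real m)) \<longlonglongrightarrow> 0"
      using tendsto_diff[OF hurwitz_shift_tendsto_zero[OF s \<open>n \<ge> 2\<close>] lim[OF s]] by simp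
    show "hurwitz n (s + 1) - L (s + 1) \<le> hurwitz n s - L s"
      using hurwitz_shift[OF s \<open>n \<ge> 2\<close>] step[OF s] by simp
  qed
  then show ?thesis by simp
qed

lemma hurwitz_upper_bound:
  assumes "t > 0" "n \<ge> 2"
    and lim: "\<And>s. s > 0 \<Longrightarrow> (\<lambda>m. U (s + real m)) \<longlonglongrightarrow> 0"
    and step: "\<And>s. s > 0 \<Longrightarrow> 1 / s ^ n \<le> U s - U (s + 1)"
  shows "hurwitz n t \<le> U t"
proof -
  have "U t - hurwitz n t \<ge> 0"
  proof (rule nonneg_if_shift_decreasing[where \<Phi> = "\<lambda>s. U s - hurwitz n s", OF \<open>t > 0\<close>])
    fix s :: real assume s: "s > 0"
    show "(\<lambda>m. U (s + real m) - hurwitz n (s + real m)) \<longlonglongrightarrow> 0"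
      using tendsto_diff[OF lim[OF s] hurwitz_shift_tendsto_zero[OF s \<open>n \<ge> 2\<close>]] by simp
    show "U (s + 1) - hurwitz n (s + 1) \<le> U s - hurwitz n s"
      using hurwitz_shift[OF s \<open>n \<ge> 2\<close>] step[OF s] by simp
  qed
  then show ?thesis by simp
qed

lemma hurwitz_2_lower: "t > 0 \<Longrightarrow> 1 / t + 1 / (2 * t ^ 2) \<le> hurwitz 2 t"
proof (erule hurwitz_lower_bound)
  fix s :: real assume s: "s > 0"
  show "(\<lambda>m. 1 / (s + real m) + 1 / (2 * (s + real m) ^ 2)) \<longlonglongrightarrow> 0"
    using s by real_asymp
  have "1 / s + 1 / (2 * s ^ 2) - (1 / (s + 1) + 1 / (2 * (s + 1) ^ 2))
      = 1 / s ^ 2 - 1 / (2 * s ^ 2 * (s + 1) ^ 2)"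
    using s by (simp add: divide_simps add_pos_pos) algebra
  then show "1 / s + 1 / (2 * s ^ 2) - (1 / (s + 1) + 1 / (2 * (s + 1) ^ 2)) \<le> 1 / s ^ 2"
    using s by simp
qed simp

lemma hurwitz_2_upper: "t > 0 \<Longrightarrow> hurwitz 2 t \<le> 1 / t + 1 / (2 * t ^ 2) + 1 / (6 * t ^ 3)"
proof (erule hurwitz_upper_bound)
  fix s :: real assume s: "s > 0"
  show "(\<lambda>m. 1 / (s + real m) + 1 / (2 * (s + real m) ^ 2) + 1 / (6 * (s + real m) ^ 3)) \<longlonglongrightarrow> 0"
    using s by real_asymp
  have "1 / s + 1 / (2 * s ^ 2) + 1 / (6 * s ^ 3) - (1 / (s + 1) + 1 / (2 * (s + 1) ^ 2) + 1 / (6 * (s + 1) ^ 3))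
      = 1 / s ^ 2 + 1 / (6 * s ^ 3 * (s + 1) ^ 3)"
    using s by (simp add: divide_simps add_pos_pos) algebra
  then show "1 / s ^ 2 \<le> 1 / s + 1 / (2 * s ^ 2) + 1 / (6 * s ^ 3) - (1 / (s + 1) + 1 / (2 * (s + 1) ^ 2) + 1 / (6 * (s + 1) ^ 3))"
    using s by simp
qed simp

lemma hurwitz_3_upper: "t > 0 \<Longrightarrow> hurwitz 3 t \<le> 1 / (2 * t ^ 2) + 1 / (2 * t ^ 3) + 1 / (4 * t ^ 4)"
proof (erule hurwitz_upper_bound)
  fix s :: real assume s: "s > 0"
  show "(\<lambda>m. 1 / (2 * (s + real m) ^ 2) + 1 / (2 * (s + real m) ^ 3) + 1 / (4 * (s + real m) ^ 4)) \<longlonglongrightarrow> 0"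
    using s by real_asymp
  define u where "u = s + 1"
  have u: "u > 0" using s by (simp add: u_def)
  define P where "P = 1 + 7 * s + 20 * s ^ 2 + 30 * s ^ 3 + 25 * s ^ 4 + 11 * s ^ 5 + 2 * s ^ 6"
  have "1 / (2 * s ^ 2) + 1 / (2 * s ^ 3) + 1 / (4 * s ^ 4) - (1 / (2 * u ^ 2) + 1 / (2 * u ^ 3) + 1 / (4 * u ^ 4))
      = 1 / s ^ 3 + P / (4 * s ^ 4 * u ^ 9)"
    unfolding P_def using s u by (simp add: field_simps) (use u_def in algebra)
  moreover have "P / (4 * s ^ 4 * u ^ 9) > 0"
    unfolding P_def using s u by (intro divide_pos_pos add_pos_pos mult_pos_pos zero_less_power) auto
  ultimately show "1 / s ^ 3 \<le> 1 / (2 * s ^ 2) + 1 / (2 * s ^ 3) + 1 / (4 * s ^ 4) - (1 / (2 * (s + 1) ^ 2) + 1 / (2 * (s + 1) ^ 3) + 1 / (4 * (s + 1) ^ 4))"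
    by (simp add: u_def)
qed simp

lemma hurwitz_4_lower: "t > 0 \<Longrightarrow> 1 / (3 * t ^ 3) + 1 / (2 * t ^ 4) \<le> hurwitz 4 t"
proof (erule hurwitz_lower_bound)
  fix s :: real assume s: "s > 0"
  show "(\<lambda>m. 1 / (3 * (s + real m) ^ 3) + 1 / (2 * (s + real m) ^ 4)) \<longlonglongrightarrow> 0"
    using s by real_asymp
  define u where "u = s + 1"
  have u: "u > 0" using s by (simp add: u_def)
  define P where "P = 3 + 19 * s + 49 * s ^ 2 + 63 * s ^ 3 + 40 * s ^ 4 + 10 * s ^ 5"
  have "1 / (3 * s ^ 3) + 1 / (2 * s ^ 4) - (1 / (3 * u ^ 3) + 1 / (2 * u ^ 4)) = 1 / s ^ 4 - P / (6 * s ^ 4 * u ^ 7)"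
    unfolding P_def using s u by (simp add: field_simps) (use u_def in algebra)
  moreover have "P / (6 * s ^ 4 * u ^ 7) > 0"
    unfolding P_def using s u by (intro divide_pos_pos add_pos_pos mult_pos_pos zero_less_power) auto
  ultimately show "1 / (3 * s ^ 3) + 1 / (2 * s ^ 4) - (1 / (3 * (s + 1) ^ 3) + 1 / (2 * (s + 1) ^ 4)) \<le> 1 / s ^ 4"
    by (simp add: u_def)
qed simp

lemma hurwitz_3_shift_lt: "t > 0 \<Longrightarrow> 2 * hurwitz 3 (t + 1) < 1 / t ^ 2"
proof -
  assume t: "t > 0"
  have "1 / t ^ 2 - 2 * hurwitz 3 (t + 1) > 0"
  proof (rule pos_if_shift_strictly_decreasing[where \<Phi> = "\<lambda>s. 1 / s ^ 2 - 2 * hurwitz 3 (s + 1)", OF t])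
    fix s :: real assume s: "s > 0"
    have h: "(\<lambda>m. hurwitz 3 (s + real m + 1)) \<longlonglongrightarrow> 0"
      using hurwitz_shift_tendsto_zero[of "s + 1" 3] s by (simp add: add_ac)
    have r: "(\<lambda>m. 1 / (s + real m) ^ 2) \<longlonglongrightarrow> 0"
      using s by real_asymp
    show "(\<lambda>m. 1 / (s + real m) ^ 2 - 2 * hurwitz 3 (s + real m + 1)) \<longlonglongrightarrow> 0"
      using tendsto_diff[OF r tendsto_mult[OF tendsto_const[of 2] h]] by simp
    have "1 / (s + 1) ^ 2 + 2 / (s + 1) ^ 3 < 1 / s ^ 2"
    proof -
      have "1 / s ^ 2 - (1 / (s + 1) ^ 2 + 2 / (s + 1) ^ 3) = (3 * s + 1) / (s ^ 2 * (s + 1) ^ 3)"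
        using s by (simp add: field_simps) algebra
      moreover have "(3 * s + 1) / (s ^ 2 * (s + 1) ^ 3) > 0"
        using s by (intro divide_pos_pos) auto
      ultimately show ?thesis by linarith
    qed
    then show "1 / (s + 1) ^ 2 - 2 * hurwitz 3 (s + 1 + 1) < 1 / s ^ 2 - 2 * hurwitz 3 (s + 1)"
      using hurwitz_shift[of "s + 1" 3] s by simp
  qed
  then show ?thesis by simp
qed

lemma x_hurwitz_3_shift_tendsto_zero:
  assumes "s > 0"
  shows "(\<lambda>m. (s + real m) * hurwitz 3 (s + real m)) \<longlonglongrightarrow> 0"
proof (rule tendsto_sandwich)
  show "\<forall>\<^sub>F m in sequentially. 0 \<le> (s + real m) * hurwitz 3 (s + real m)"
    using assms hurwitz_pos[of _ 3] by (intro always_eventually allI) (simp add: less_imp_le)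
  show "\<forall>\<^sub>F m in sequentially. (s + real m) * hurwitz 3 (s + real m)
      \<le> (s + real m) * (1 / (2 * (s + real m) ^ 2) + 1 / (2 * (s + real m) ^ 3) + 1 / (4 * (s + real m) ^ 4))"
    using assms hurwitz_3_upper by (intro always_eventually allI mult_left_mono) auto
  show "(\<lambda>m. (s + real m) * (1 / (2 * (s + real m) ^ 2) + 1 / (2 * (s + real m) ^ 3) + 1 / (4 * (s + real m) ^ 4)))
      \<longlonglongrightarrow> 0"
    using assms by real_asymp
qed simp

lemma hurwitz_2_lt: "t > 0 \<Longrightarrow> hurwitz 2 t < 2 * t * hurwitz 3 t"
proof -
  assume t: "t > 0"
  have "2 * t * hurwitz 3 t - hurwitz 2 t > 0"
  proof (rule pos_if_shift_strictly_decreasing[where \<Phi> = "\<lambda>s. 2 * s * hurwitz 3 s - hurwitz 2 s", OF t])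
    fix s :: real assume s: "s > 0"
    show "(\<lambda>m. 2 * (s + real m) * hurwitz 3 (s + real m) - hurwitz 2 (s + real m)) \<longlonglongrightarrow> 0"
      unfolding mult.assoc using tendsto_diff[OF tendsto_mult[OF tendsto_const[of 2] x_hurwitz_3_shift_tendsto_zero[OF s]]
          hurwitz_shift_tendsto_zero[OF s, of 2]]
      by simp
    have "2 * s * hurwitz 3 s - hurwitz 2 s - (2 * (s + 1) * hurwitz 3 (s + 1) - hurwitz 2 (s + 1))
        = 1 / s ^ 2 - 2 * hurwitz 3 (s + 1)"
      using hurwitz_shift[OF s, of 2] hurwitz_shift[OF s, of 3] s
      by (simp add: algebra_simps power2_eq_square power3_eq_cube)
    then show "2 * (s + 1) * hurwitz 3 (s + 1) - hurwitz 2 (s + 1) < 2 * s * hurwitz 3 s - hurwitz 2 s"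
      using hurwitz_3_shift_lt[OF s] by simp
  qed
  then show ?thesis by simp
qed

lemma hurwitz_bounds_gap:
  fixes t u :: real
  assumes "t > 0" "u = t + 1"
  shows "3 * t * ((1 / t ^ 2 + 1 / u + 1 / (2 * u ^ 2)) * (1 / t ^ 4 + 1 / (3 * u ^ 3) + 1 / (2 * u ^ 4)))
     - ((1 / t ^ 2 + 1 / u + 1 / (2 * u ^ 2) + 1 / (6 * u ^ 3))
          * (1 / t ^ 3 + 1 / (2 * u ^ 2) + 1 / (2 * u ^ 3) + 1 / (4 * u ^ 4))
        + 2 * t * (1 / t ^ 3 + 1 / (2 * u ^ 2) + 1 / (2 * u ^ 3) + 1 / (4 * u ^ 4))\<^sup>2)
   = (68 + 310 * t + 608 * t ^ 2 + 654 * t ^ 3 + 386 * t ^ 4 + 123 * t ^ 5 + 28 * t ^ 6 + 6 * t ^ 7)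
     / (24 * t ^ 3 * u ^ 8)"
proof -
  have "u > 0" using assms by simp
  with \<open>t > 0\<close> show ?thesis by (simp add: field_simps) (use assms(2) in algebra)
qed

text \<open>Only the tails of the series are bounded, the first terms are kept exact: the bounds alone
  are too weak near \<open>t = 0\<close>.\<close>
lemma hurwitz_key_ineq:
  assumes "t > 0"
  shows "hurwitz 2 t * hurwitz 3 t + 2 * t * (hurwitz 3 t)\<^sup>2 < 3 * t * hurwitz 2 t * hurwitz 4 t"
proof -
  define u where "u = t + 1"
  have u: "u > 0" using assms by (simp add: u_def)
  define l2 where "l2 = 1 / t ^ 2 + 1 / u + 1 / (2 * u ^ 2)"
  define u2 where "u2 = 1 / t ^ 2 + 1 / u + 1 / (2 * u ^ 2) + 1 / (6 * u ^ 3)"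
  define u3 where "u3 = 1 / t ^ 3 + 1 / (2 * u ^ 2) + 1 / (2 * u ^ 3) + 1 / (4 * u ^ 4)"
  define l4 where "l4 = 1 / t ^ 4 + 1 / (3 * u ^ 3) + 1 / (2 * u ^ 4)"
  have shift: "hurwitz n t = 1 / t ^ n + hurwitz n u" if "n \<ge> 2" for n
    using hurwitz_shift[OF assms that] by (simp add: u_def)
  have l2: "l2 \<le> hurwitz 2 t" and u2: "hurwitz 2 t \<le> u2"
    and u3: "hurwitz 3 t \<le> u3" and l4: "l4 \<le> hurwitz 4 t"
    using shift hurwitz_2_lower[OF u] hurwitz_2_upper[OF u] hurwitz_3_upper[OF u] hurwitz_4_lower[OF u]
    by (simp_all add: l2_def u2_def u3_def l4_def)
  have "l2 \<ge> 0" "l4 \<ge> 0" "hurwitz 2 t \<ge> 0" "hurwitz 3 t \<ge> 0"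
    using assms u hurwitz_pos[OF assms] by (simp_all add: l2_def l4_def less_imp_le)
  then have "3 * t * (l2 * l4) \<le> 3 * t * (hurwitz 2 t * hurwitz 4 t)"
    using assms l2 l4 by (intro mult_left_mono mult_mono) auto
  moreover have "hurwitz 2 t * hurwitz 3 t \<le> u2 * u3"
    using \<open>hurwitz 2 t \<ge> 0\<close> \<open>hurwitz 3 t \<ge> 0\<close> u2 u3 by (intro mult_mono) auto
  moreover have "2 * t * (hurwitz 3 t)\<^sup>2 \<le> 2 * t * u3\<^sup>2"
    using assms \<open>hurwitz 3 t \<ge> 0\<close> u3 by (intro mult_left_mono power_mono) auto
  moreover have "3 * t * (l2 * l4) - (u2 * u3 + 2 * t * u3\<^sup>2)
      = (68 + 310 * t + 608 * t ^ 2 + 654 * t ^ 3 + 386 * t ^ 4 + 123 * t ^ 5 + 28 * t ^ 6 + 6 * t ^ 7)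
        / (24 * t ^ 3 * u ^ 8)"
    unfolding l2_def u2_def u3_def l4_def using assms u_def by (rule hurwitz_bounds_gap)
  moreover have "(68 + 310 * t + 608 * t ^ 2 + 654 * t ^ 3 + 386 * t ^ 4 + 123 * t ^ 5 + 28 * t ^ 6 + 6 * t ^ 7)
        / (24 * t ^ 3 * u ^ 8) > 0"
    using assms u by (intro divide_pos_pos add_pos_pos mult_pos_pos zero_less_power) auto
  ultimately show ?thesis by linarith
qed

section \<open>Monotonicity of trigamma quotients\<close>

lemma Polygamma_1_eq_hurwitz: "Polygamma 1 (t::real) = hurwitz 2 t"
  by (simp add: Polygamma_def hurwitz_def inverse_eq_divide power2_eq_square)

lemma Polygamma_2_eq_hurwitz: "Polygamma 2 (t::real) = - 2 * hurwitz 3 t"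
  by (simp add: Polygamma_def hurwitz_def inverse_eq_divide numeral_eq_Suc)

lemma Polygamma_3_eq_hurwitz: "Polygamma 3 (t::real) = 6 * hurwitz 4 t"
  by (simp add: Polygamma_def hurwitz_def inverse_eq_divide numeral_eq_Suc)

lemma Polygamma_1_pos: "(t::real) > 0 \<Longrightarrow> Polygamma 1 t > 0"
  using Polygamma_1_eq_hurwitz hurwitz_pos by simp

lemma Polygamma_2_neg: "(t::real) > 0 \<Longrightarrow> Polygamma 2 t < 0"
  by (simp add: Polygamma_2_eq_hurwitz hurwitz_pos)

lemma has_real_derivative_Polygamma:
  "(t::real) > 0 \<Longrightarrow> (Polygamma n has_real_derivative Polygamma (Suc n) t) (at t)"
  by (rule has_field_derivative_Polygamma) (auto elim!: nonpos_Ints_cases)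

lemma x_Polygamma_1_strict_antimono:
  fixes x y :: real
  assumes "0 < x" "x < y"
  shows "y * Polygamma 1 y < x * Polygamma 1 x"
proof (rule DERIV_neg_imp_decreasing[OF \<open>x < y\<close>])
  fix t assume "x \<le> t" "t \<le> y"
  with assms have t: "t > 0" by simp
  have "((\<lambda>t. t * Polygamma 1 t) has_real_derivative t * Polygamma 2 t + Polygamma 1 t) (at t)"
    using DERIV_mult'[OF DERIV_ident has_real_derivative_Polygamma[OF t, of 1]] by (simp add: numeral_2_eq_2)
  moreover have "t * Polygamma 2 t + Polygamma 1 t < 0"
    using hurwitz_2_lt[OF t] Polygamma_1_eq_hurwitz Polygamma_2_eq_hurwitz by simp
  ultimately show "\<exists>d. ((\<lambda>t. t * Polygamma 1 t) has_real_derivative d) (at t) \<and> d < 0" by blast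
qed

lemma x_Polygamma_ratio_strict_mono:
  fixes x y :: real
  assumes "0 < x" "x < y"
  shows "x * Polygamma 2 x / Polygamma 1 x < y * Polygamma 2 y / Polygamma 1 y"
proof (rule DERIV_pos_imp_increasing[OF \<open>x < y\<close>])
  fix t assume "x \<le> t" "t \<le> y"
  with assms have t: "t > 0" by simp
  define a b c where "a = Polygamma 1 t" and "b = Polygamma 2 t" and "c = Polygamma 3 t"
  have "a > 0" using Polygamma_1_pos[OF t] by (simp add: a_def)
  have "((\<lambda>t. t * Polygamma 2 t / Polygamma 1 t) has_real_derivative
      ((t * c + b) * a - t * b * b) / (a * a)) (at t)"
    unfolding a_def b_def c_def
    using DERIV_divide[OF DERIV_mult'[OF DERIV_ident has_real_derivative_Polygamma[OF t, of 2]]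
        has_real_derivative_Polygamma[OF t, of 1]] Polygamma_1_pos[OF t]
    by (simp add: numeral_2_eq_2 numeral_3_eq_3)
  moreover have "(t * c + b) * a - t * b * b
      = 2 * (3 * t * hurwitz 2 t * hurwitz 4 t - (hurwitz 2 t * hurwitz 3 t + 2 * t * (hurwitz 3 t)\<^sup>2))"
    unfolding a_def b_def c_def Polygamma_1_eq_hurwitz Polygamma_2_eq_hurwitz Polygamma_3_eq_hurwitz
    by (simp add: algebra_simps power2_eq_square)
  ultimately show "\<exists>d. ((\<lambda>t. t * Polygamma 2 t / Polygamma 1 t) has_real_derivative d) (at t) \<and> d > 0"
    using hurwitz_key_ineq[OF t] \<open>a > 0\<close> by auto
qed

lemma add_lt_of_div_lt:
  fixes F :: "real \<Rightarrow> real"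
  assumes "x > 0" "y > 0" "F x / x < F (x + y) / (x + y)" "F y / y < F (x + y) / (x + y)"
  shows "F x + F y < F (x + y)"
proof -
  have "F x < x * (F (x + y) / (x + y))" "F y < y * (F (x + y) / (x + y))"
    using assms by (simp_all add: field_simps)
  moreover have "x * (F (x + y) / (x + y)) + y * (F (x + y) / (x + y)) = (x + y) * (F (x + y) / (x + y))"
    by (rule distrib_right[symmetric])
  ultimately show ?thesis
    using assms by simp
qed

lemma Polygamma_1_add_ineq:
  fixes x y :: real
  assumes "x > 0" "y > 0"
  shows "Polygamma 1 (x + y) * (Polygamma 1 x + Polygamma 1 y) < Polygamma 1 x * Polygamma 1 y"
proof -
  have quot: "1 / Polygamma 1 t / t < 1 / Polygamma 1 (x + y) / (x + y)" if "t > 0" "t < x + y" for t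
  proof -
    have "0 < (x + y) * Polygamma 1 (x + y)"
      using assms Polygamma_1_pos[of "x + y"] by simp
    with x_Polygamma_1_strict_antimono[OF that] show ?thesis
      using less_imp_inverse_less by (simp add: inverse_eq_divide mult.commute)
  qed
  have "1 / Polygamma 1 x + 1 / Polygamma 1 y < 1 / Polygamma 1 (x + y)"
    by (rule add_lt_of_div_lt[where F = "\<lambda>t. 1 / Polygamma 1 t"]) (use assms quot in auto)
  then show ?thesis
    using Polygamma_1_pos[of x] Polygamma_1_pos[of y] Polygamma_1_pos[of "x + y"] assms
    by (simp add: field_simps)
qed

lemma Polygamma_2_add_ineq:
  fixes x y :: real
  assumes "x > 0" "y > 0"
  shows "Polygamma 2 (x + y) * (Polygamma 1 x * Polygamma 2 y + Polygamma 2 x * Polygamma 1 y)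
    < Polygamma 2 x * Polygamma 2 y * Polygamma 1 (x + y)"
proof -
  define Q where "Q t = t * Polygamma 2 t / Polygamma 1 t" for t :: real
  have Q_neg: "Q t < 0" if "t > 0" for t
    using Polygamma_1_pos[OF that] Polygamma_2_neg[OF that] that
    by (simp add: Q_def divide_neg_pos mult_pos_neg)
  have quot: "- Polygamma 1 t / Polygamma 2 t / t < - Polygamma 1 (x + y) / Polygamma 2 (x + y) / (x + y)"
    if "t > 0" "t < x + y" for t
  proof -
    have "inverse (- Q t) < inverse (- Q (x + y))"
      using x_Polygamma_ratio_strict_mono[OF that] Q_neg[of "x + y"] assms
      by (intro less_imp_inverse_less) (simp_all add: Q_def)
    then show ?thesis by (simp add: Q_def inverse_eq_divide mult.commute)
  qed
  define a b c where "a = Polygamma 1 x" and "b = Polygamma 1 y" and "c = Polygamma 1 (x + y)"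
  define a' b' c' where "a' = Polygamma 2 x" and "b' = Polygamma 2 y" and "c' = Polygamma 2 (x + y)"
  have "a' < 0" "b' < 0" "c' < 0"
    using Polygamma_2_neg assms by (simp_all add: a'_def b'_def c'_def)
  have "- a / a' + - b / b' < - c / c'"
    unfolding a_def b_def c_def a'_def b'_def c'_def
    by (rule add_lt_of_div_lt[where F = "\<lambda>t. - Polygamma 1 t / Polygamma 2 t"])
       (use assms quot in auto)
  moreover have "a' * b' * c' < 0"
    using mult_pos_neg[OF mult_neg_neg[OF \<open>a' < 0\<close> \<open>b' < 0\<close>] \<open>c' < 0\<close>] .
  ultimately have "(- c / c') * (a' * b' * c') < (- a / a' + - b / b') * (a' * b' * c')"
    by (rule mult_strict_right_mono_neg)
  then show ?thesis
    using \<open>a' < 0\<close> \<open>b' < 0\<close> \<open>c' < 0\<close>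
    by (simp add: a_def b_def c_def a'_def b'_def c'_def field_simps)
qed

section \<open>Curvature of a Hessian metric with index-sum symmetry\<close>

text \<open>
  The sequences \<open>g\<close>, \<open>h\<close>, \<open>k\<close> hold the second, third and fourth derivatives of a potential in
  the plane whose components only depend on the sum of the indices, so that \<open>g\<^sub>i\<^sub>j = g (i + j)\<close>.
  Then \<open>christ_formula g h l (i + j)\<close> is the Christoffel symbol \<open>\<Gamma>\<^sup>l\<^sub>i\<^sub>j\<close>, its derivative in
  direction \<open>i\<close> is obtained by shifting \<open>h\<close> and \<open>k\<close> by \<open>i\<close>, and \<open>riem_formula g h k l n\<close>
  is \<open>R\<^sup>l\<^sub>0\<^sub>1\<^sub>n\<close>.
\<close>

definition det2 :: "(nat \<Rightarrow> real) \<Rightarrow> real" where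
  "det2 g = g 0 * g 2 - g 1 * g 1"

definition christ_num :: "(nat \<Rightarrow> real) \<Rightarrow> (nat \<Rightarrow> real) \<Rightarrow> nat \<Rightarrow> nat \<Rightarrow> real" where
  "christ_num g h l m = (if l = 0 then g 2 * h m - g 1 * h (Suc m) else g 0 * h (Suc m) - g 1 * h m)"

definition christ_formula :: "(nat \<Rightarrow> real) \<Rightarrow> (nat \<Rightarrow> real) \<Rightarrow> nat \<Rightarrow> nat \<Rightarrow> real" where
  "christ_formula g h l m = christ_num g h l m / (2 * det2 g)"

definition det2_deriv :: "(nat \<Rightarrow> real) \<Rightarrow> (nat \<Rightarrow> real) \<Rightarrow> real" where
  "det2_deriv g g' = g' 0 * g 2 + g 0 * g' 2 - 2 * g 1 * g' 1"

definition christ_num_deriv ::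
    "(nat \<Rightarrow> real) \<Rightarrow> (nat \<Rightarrow> real) \<Rightarrow> (nat \<Rightarrow> real) \<Rightarrow> (nat \<Rightarrow> real) \<Rightarrow> nat \<Rightarrow> nat \<Rightarrow> real" where
  "christ_num_deriv g g' h h' l m =
     (if l = 0 then g' 2 * h m + g 2 * h' m - g' 1 * h (Suc m) - g 1 * h' (Suc m)
      else g' 0 * h (Suc m) + g 0 * h' (Suc m) - g' 1 * h m - g 1 * h' m)"

definition christ_formula_deriv ::
    "(nat \<Rightarrow> real) \<Rightarrow> (nat \<Rightarrow> real) \<Rightarrow> (nat \<Rightarrow> real) \<Rightarrow> (nat \<Rightarrow> real) \<Rightarrow> nat \<Rightarrow> nat \<Rightarrow> real" where
  "christ_formula_deriv g g' h h' l m =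
     (christ_num_deriv g g' h h' l m * det2 g - christ_num g h l m * det2_deriv g g') / (2 * (det2 g)\<^sup>2)"

definition riem_formula :: "(nat \<Rightarrow> real) \<Rightarrow> (nat \<Rightarrow> real) \<Rightarrow> (nat \<Rightarrow> real) \<Rightarrow> nat \<Rightarrow> nat \<Rightarrow> real" where
  "riem_formula g h k l n =
     christ_formula_deriv g h h k l (Suc n)
     - christ_formula_deriv g (\<lambda>m. h (Suc m)) h (\<lambda>m. k (Suc m)) l n
     + (\<Sum>m<2. christ_formula g h l m * christ_formula g h m (Suc n)
               - christ_formula g h l (Suc m) * christ_formula g h m n)"

text \<open>Clearing the denominator \<open>4 (det2 g)\<^sup>2\<close> makes the curvature identities polynomial; in them the
  fourth derivatives \<open>k\<close> cancel.\<close>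
definition riem_formula_num :: "(nat \<Rightarrow> real) \<Rightarrow> (nat \<Rightarrow> real) \<Rightarrow> (nat \<Rightarrow> real) \<Rightarrow> nat \<Rightarrow> nat \<Rightarrow> real" where
  "riem_formula_num g h k l n =
     2 * (christ_num_deriv g h h k l (Suc n) * det2 g - christ_num g h l (Suc n) * det2_deriv g h)
     - 2 * (christ_num_deriv g (\<lambda>m. h (Suc m)) h (\<lambda>m. k (Suc m)) l n * det2 g
            - christ_num g h l n * det2_deriv g (\<lambda>m. h (Suc m)))
     + (\<Sum>m<2. christ_num g h l m * christ_num g h m (Suc n) - christ_num g h l (Suc m) * christ_num g h m n)"

definition det3 :: "(nat \<Rightarrow> real) \<Rightarrow> (nat \<Rightarrow> real) \<Rightarrow> real" where
  "det3 g h = g 0 * (h 1 * h 3 - h 2 * h 2) - g 1 * (h 0 * h 3 - h 2 * h 1) + g 2 * (h 0 * h 2 - h 1 * h 1)"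

lemma lessThan_2_nat: "{..<2::nat} = {0, 1}"
  by auto

lemma riem_formula_eq_num:
  "det2 g \<noteq> 0 \<Longrightarrow> riem_formula g h k l n = riem_formula_num g h k l n / (4 * (det2 g)\<^sup>2)"
  unfolding riem_formula_def riem_formula_num_def christ_formula_deriv_def christ_formula_def lessThan_2_nat
  by (simp add: field_simps power2_eq_square)

lemma riem_formula_num_lowered:
  shows "(\<Sum>l<2. riem_formula_num g h k l 0 * g l) = 0"
    and "(\<Sum>l<2. riem_formula_num g h k l 0 * g (Suc l)) = det3 g h * det2 g"
    and "(\<Sum>l<2. riem_formula_num g h k l 1 * g l) = - det3 g h * det2 g"
    and "(\<Sum>l<2. riem_formula_num g h k l 1 * g (Suc l)) = 0"
  unfolding riem_formula_num_def christ_num_def christ_num_deriv_def det2_deriv_def det2_def det3_def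
    lessThan_2_nat
  by (simp_all add: numeral_2_eq_2 numeral_3_eq_3; algebra)+

lemma riem_formula_lowered:
  assumes "det2 g \<noteq> 0"
  shows "(\<Sum>l<2. riem_formula g h k l 0 * g l) = 0"
    and "(\<Sum>l<2. riem_formula g h k l 0 * g (Suc l)) = det3 g h / (4 * det2 g)"
    and "(\<Sum>l<2. riem_formula g h k l 1 * g l) = - det3 g h / (4 * det2 g)"
    and "(\<Sum>l<2. riem_formula g h k l 1 * g (Suc l)) = 0"
  using riem_formula_num_lowered[of g h k] assms
  by (simp_all add: riem_formula_eq_num sum_divide_distrib[symmetric] power2_eq_square)

section \<open>The Fisher metric of the beta family\<close>

text \<open>For \<open>n \<ge> 1\<close>, the partial derivative of order \<open>n\<close> of \<open>ln B\<close>, taken \<open>m\<close> times in \<open>y\<close>;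
  mixed derivatives only see the term \<open>ln \<Gamma> (x + y)\<close>.\<close>
definition ln_beta_deriv :: "nat \<Rightarrow> nat \<Rightarrow> real \<times> real \<Rightarrow> real" where
  "ln_beta_deriv n m q = (if m = 0 then Polygamma (n - 1) (fst q) else 0)
     + (if m = n then Polygamma (n - 1) (snd q) else 0) - Polygamma (n - 1) (fst q + snd q)"

lemma shift_0 [simp]: "shift i 0 q = q"
  by (simp add: shift_def)

lemma pd_eqI: "((\<lambda>t. f (shift i t q)) has_real_derivative d) (at 0) \<Longrightarrow> pd i f q = d"
  unfolding pd_def by (rule DERIV_imp_deriv)

lemma pd_cong_pos:
  assumes "\<And>q'. fst q' > 0 \<Longrightarrow> snd q' > 0 \<Longrightarrow> f q' = g q'" and "fst q > 0" "snd q > 0"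
  shows "pd i f q = pd i g q"
  unfolding pd_def
proof (rule deriv_cong_ev)
  have "\<forall>\<^sub>F t in nhds 0. \<bar>t\<bar> < min (fst q) (snd q)"
    using assms(2,3) by (auto simp: eventually_nhds_metric dist_real_def intro!: exI[of _ "min (fst q) (snd q)"])
  then show "\<forall>\<^sub>F t in nhds 0. f (shift i t q) = g (shift i t q)"
    by eventually_elim (use assms in \<open>auto simp: shift_def\<close>)
qed simp

lemma has_real_derivative_ln_beta_deriv:
  assumes q: "fst q > 0" "snd q > 0" and "n > 0" "m \<le> n" "i < 2"
  shows "((\<lambda>t. ln_beta_deriv n m (shift i t q)) has_real_derivative ln_beta_deriv (Suc n) (m + i) q) (at 0)"
proof -
  obtain n' where n: "n = Suc n'" using \<open>n > 0\<close> by (cases n) auto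
  have Polygamma_shift: "((\<lambda>t. Polygamma n' (a + t)) has_real_derivative Polygamma n a) (at 0)" if "a > 0" for a
  proof -
    have "((\<lambda>t. a + t) has_real_derivative 1) (at 0)"
      by (auto intro!: derivative_eq_intros)
    from DERIV_chain2[OF _ this] show ?thesis
      using has_real_derivative_Polygamma[of a n'] that by (simp add: n)
  qed
  consider "i = 0" | "i = 1" using \<open>i < 2\<close> by linarith
  then show ?thesis
  proof cases
    case 1
    have f: "(\<lambda>t. ln_beta_deriv n m (shift i t q)) = (\<lambda>t. (if m = 0 then Polygamma n' (fst q + t) else 0)
        + (if m = n then Polygamma n' (snd q) else 0) - Polygamma n' (fst q + snd q + t))"
      using 1 by (intro ext) (simp add: ln_beta_deriv_def shift_def n add_ac)
    have d: "ln_beta_deriv (Suc n) (m + i) q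
        = (if m = 0 then Polygamma n (fst q) else 0) + 0 - Polygamma n (fst q + snd q)"
      using 1 \<open>m \<le> n\<close> by (simp add: ln_beta_deriv_def n)
    show ?thesis unfolding f d
      using q by (intro DERIV_diff DERIV_add) (auto intro: DERIV_const Polygamma_shift)
  next
    case 2
    have f: "(\<lambda>t. ln_beta_deriv n m (shift i t q)) = (\<lambda>t. (if m = 0 then Polygamma n' (fst q) else 0)
        + (if m = n then Polygamma n' (snd q + t) else 0) - Polygamma n' (fst q + snd q + t))"
      using 2 by (intro ext) (simp add: ln_beta_deriv_def shift_def n add_ac)
    have d: "ln_beta_deriv (Suc n) (m + i) q
        = 0 + (if m = n then Polygamma n (snd q) else 0) - Polygamma n (fst q + snd q)"
      using 2 by (simp add: ln_beta_deriv_def n)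
    show ?thesis unfolding f d
      using q by (intro DERIV_diff DERIV_add) (auto intro: DERIV_const Polygamma_shift)
  qed
qed

lemma pd_ln_beta_deriv:
  "fst q > 0 \<Longrightarrow> snd q > 0 \<Longrightarrow> n > 0 \<Longrightarrow> m \<le> n \<Longrightarrow> i < 2 \<Longrightarrow>
    pd i (ln_beta_deriv n m) q = ln_beta_deriv (Suc n) (m + i) q"
  by (rule pd_eqI[OF has_real_derivative_ln_beta_deriv])

lemma fisher_eq_ln_beta_deriv: "j < 2 \<Longrightarrow> k < 2 \<Longrightarrow> fisher j k = ln_beta_deriv 2 (j + k)"
  by (rule ext) (auto simp: fisher_def ln_beta_deriv_def Let_def less_2_cases_iff)

lemma fisher_det_eq_det2: "fisher_det q = det2 (\<lambda>m. ln_beta_deriv 2 m q)"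
  by (simp add: fisher_det_def det2_def fisher_def ln_beta_deriv_def Let_def)

lemma fisher_det_pos: "fst q > 0 \<Longrightarrow> snd q > 0 \<Longrightarrow> fisher_det q > 0"
  using Polygamma_1_add_ineq[of "fst q" "snd q"]
  by (simp add: fisher_det_eq_det2 det2_def ln_beta_deriv_def algebra_simps)

lemma det3_ln_beta_deriv_pos:
  "fst q > 0 \<Longrightarrow> snd q > 0 \<Longrightarrow> det3 (\<lambda>m. ln_beta_deriv 2 m q) (\<lambda>m. ln_beta_deriv 3 m q) > 0"
  using Polygamma_2_add_ineq[of "fst q" "snd q"]
  by (simp add: det3_def ln_beta_deriv_def algebra_simps eval_nat_numeral)

lemma christ1_eq:
  assumes "fst q > 0" "snd q > 0" "i < 2" "j < 2" "k < 2"
  shows "christ1 i j k q = ln_beta_deriv 3 (i + j + k) q / 2"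
  using assms by (simp add: christ1_def fisher_eq_ln_beta_deriv pd_ln_beta_deriv add_ac)

lemma christ2_eq:
  assumes q: "fst q > 0" "snd q > 0" and "l < 2" "j < 2" "k < 2"
  shows "christ2 l j k q = christ_formula (\<lambda>m. ln_beta_deriv 2 m q) (\<lambda>m. ln_beta_deriv 3 m q) l (j + k)"
proof -
  have "christ2 l j k q = fisher_inv l 0 q * (ln_beta_deriv 3 (j + k) q / 2)
      + fisher_inv l 1 q * (ln_beta_deriv 3 (Suc (j + k)) q / 2)"
    using assms by (simp add: christ2_def lessThan_2_nat christ1_eq)
  also have "\<dots> = christ_formula (\<lambda>m. ln_beta_deriv 2 m q) (\<lambda>m. ln_beta_deriv 3 m q) l (j + k)"
    using \<open>l < 2\<close> fisher_det_pos[OF q]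
    by (auto simp: fisher_inv_def fisher_det_eq_det2 christ_formula_def christ_num_def fisher_def
        ln_beta_deriv_def Let_def less_2_cases_iff field_simps eval_nat_numeral)
  finally show ?thesis .
qed

lemma has_real_derivative_det2:
  assumes "\<And>m. m \<le> 2 \<Longrightarrow> (G m has_real_derivative G' m) (at 0)"
  shows "((\<lambda>t. det2 (\<lambda>m. G m t)) has_real_derivative det2_deriv (\<lambda>m. G m 0) G') (at 0)"
  unfolding det2_def det2_deriv_def
  by (auto intro!: derivative_eq_intros assms simp: algebra_simps)

lemma has_real_derivative_christ_num:
  assumes "\<And>m. m \<le> 2 \<Longrightarrow> (G m has_real_derivative G' m) (at 0)"
    and "\<And>m. m \<le> 3 \<Longrightarrow> (H m has_real_derivative H' m) (at 0)" and "m \<le> 2"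
  shows "((\<lambda>t. christ_num (\<lambda>m. G m t) (\<lambda>m. H m t) l m) has_real_derivative
           christ_num_deriv (\<lambda>m. G m 0) G' (\<lambda>m. H m 0) H' l m) (at 0)"
  unfolding christ_num_def christ_num_deriv_def using \<open>m \<le> 2\<close>
  by (cases "l = 0") (auto intro!: derivative_eq_intros assms simp: algebra_simps)

lemma has_real_derivative_christ_formula:
  assumes "\<And>m. m \<le> 2 \<Longrightarrow> (G m has_real_derivative G' m) (at 0)"
    and "\<And>m. m \<le> 3 \<Longrightarrow> (H m has_real_derivative H' m) (at 0)"
    and D: "det2 (\<lambda>m. G m 0) \<noteq> 0" and "m \<le> 2"
  shows "((\<lambda>t. christ_formula (\<lambda>m. G m t) (\<lambda>m. H m t) l m) has_real_derivative
           christ_formula_deriv (\<lambda>m. G m 0) G' (\<lambda>m. H m 0) H' l m) (at 0)"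
proof -
  have "((\<lambda>t. christ_num (\<lambda>m. G m t) (\<lambda>m. H m t) l m / (2 * det2 (\<lambda>m. G m t))) has_real_derivative
      (christ_num_deriv (\<lambda>m. G m 0) G' (\<lambda>m. H m 0) H' l m * (2 * det2 (\<lambda>m. G m 0))
        - christ_num (\<lambda>m. G m 0) (\<lambda>m. H m 0) l m * (2 * det2_deriv (\<lambda>m. G m 0) G'))
      / (2 * det2 (\<lambda>m. G m 0) * (2 * det2 (\<lambda>m. G m 0)))) (at 0)"
    using assms by (intro DERIV_divide DERIV_cmult has_real_derivative_christ_num has_real_derivative_det2) auto
  then show ?thesis
    unfolding christ_formula_def
    by (rule DERIV_cong) (use D in \<open>simp add: christ_formula_deriv_def field_simps power2_eq_square\<close>)
qed

lemma pd_christ2: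
  assumes q: "fst q > 0" "snd q > 0" and "i < 2" "l < 2" "j < 2" "k < 2"
  shows "pd i (christ2 l j k) q =
    christ_formula_deriv (\<lambda>m. ln_beta_deriv 2 m q) (\<lambda>m. ln_beta_deriv 3 (m + i) q)
      (\<lambda>m. ln_beta_deriv 3 m q) (\<lambda>m. ln_beta_deriv 4 (m + i) q) l (j + k)"
proof -
  have "pd i (christ2 l j k) q
      = pd i (\<lambda>q'. christ_formula (\<lambda>m. ln_beta_deriv 2 m q') (\<lambda>m. ln_beta_deriv 3 m q') l (j + k)) q"
    using assms by (intro pd_cong_pos christ2_eq) auto
  also have "\<dots> = christ_formula_deriv (\<lambda>m. ln_beta_deriv 2 m q) (\<lambda>m. ln_beta_deriv 3 (m + i) q)
      (\<lambda>m. ln_beta_deriv 3 m q) (\<lambda>m. ln_beta_deriv 4 (m + i) q) l (j + k)"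
  proof (rule pd_eqI)
    have dG: "((\<lambda>t. ln_beta_deriv 2 m (shift i t q)) has_real_derivative ln_beta_deriv 3 (m + i) q) (at 0)"
      if "m \<le> 2" for m
      using that \<open>i < 2\<close> has_real_derivative_ln_beta_deriv[OF q, of 2 m i] by simp
    have dH: "((\<lambda>t. ln_beta_deriv 3 m (shift i t q)) has_real_derivative ln_beta_deriv 4 (m + i) q) (at 0)"
      if "m \<le> 3" for m
      using that \<open>i < 2\<close> has_real_derivative_ln_beta_deriv[OF q, of 3 m i] by simp
    have "det2 (\<lambda>m. ln_beta_deriv 2 m (shift i 0 q)) \<noteq> 0"
      using fisher_det_pos[OF q] by (simp add: fisher_det_eq_det2)
    from has_real_derivative_christ_formula[OF dG dH this] show
      "((\<lambda>t. christ_formula (\<lambda>m. ln_beta_deriv 2 m (shift i t q)) (\<lambda>m. ln_beta_deriv 3 m (shift i t q)) l (j + k))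
        has_real_derivative christ_formula_deriv (\<lambda>m. ln_beta_deriv 2 m q) (\<lambda>m. ln_beta_deriv 3 (m + i) q)
          (\<lambda>m. ln_beta_deriv 3 m q) (\<lambda>m. ln_beta_deriv 4 (m + i) q) l (j + k)) (at 0)"
      using assms by simp
  qed
  finally show ?thesis .
qed

lemma riem_eq_riem_formula:
  assumes "fst q > 0" "snd q > 0" "l < 2" "n < 2"
  shows "riem l 0 1 n q = riem_formula (\<lambda>m. ln_beta_deriv 2 m q) (\<lambda>m. ln_beta_deriv 3 m q)
    (\<lambda>m. ln_beta_deriv 4 m q) l n"
  using assms by (simp add: riem_def riem_formula_def pd_christ2 christ2_eq lessThan_2_nat)

lemma beta_riem_lowered:
  assumes "fst q > 0" "snd q > 0" "n < 2" "m < 2"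
  shows "(\<Sum>l<2. riem l 0 1 n q * fisher l m q) =
    (\<Sum>l<2. riem_formula (\<lambda>m. ln_beta_deriv 2 m q) (\<lambda>m. ln_beta_deriv 3 m q)
      (\<lambda>m. ln_beta_deriv 4 m q) l n * ln_beta_deriv 2 (l + m) q)"
proof (rule sum.cong[OF refl])
  fix l assume "l \<in> {..<2::nat}"
  with assms show "riem l 0 1 n q * fisher l m q = riem_formula (\<lambda>m. ln_beta_deriv 2 m q)
      (\<lambda>m. ln_beta_deriv 3 m q) (\<lambda>m. ln_beta_deriv 4 m q) l n * ln_beta_deriv 2 (l + m) q"
    using riem_eq_riem_formula[of q l n] fisher_eq_ln_beta_deriv[of l m] by simp
qed

lemma fisher_gram:
  "fisher_g p u u * fisher_g p v v - (fisher_g p u v)\<^sup>2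
    = fisher_det p * (fst u * snd v - snd u * fst v)\<^sup>2"
proof -
  have "fisher 1 0 p = fisher 0 1 p"
    by (simp add: fisher_def)
  then show ?thesis
    unfolding fisher_g_def fisher_det_def lessThan_2_nat
    by (simp add: comp_def power2_eq_square algebra_simps)
qed

text \<open>The hypotheses are the symmetries of the lowered curvature tensor that, in dimension two,
  leave it a single independent component; they do not hold by definition of \<open>riem\<close>.\<close>
lemma riem4_eq_lowered:
  assumes "(\<Sum>l<2. riem l 0 1 0 p * fisher l 0 p) = 0"
    and "(\<Sum>l<2. riem l 0 1 1 p * fisher l 1 p) = 0"
    and "(\<Sum>l<2. riem l 0 1 1 p * fisher l 0 p) = - (\<Sum>l<2. riem l 0 1 0 p * fisher l 1 p)"
  shows "riem4 p u v = - (fst u * snd v - snd u * fst v)\<^sup>2 * (\<Sum>l<2. riem l 0 1 0 p * fisher l 1 p)"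
proof -
  define A where "A k m = (\<Sum>l<2. riem l 0 1 k p * fisher l m p)" for k m
  have diag: "riem l i i k p = 0" and swap: "riem l (Suc 0) 0 k p = - riem l 0 (Suc 0) k p" for l i k
    by (simp_all add: riem_def sum_subtractf)
  have "riem4 p u v = (fst u * snd v - snd u * fst v)
      * (\<Sum>k<2. \<Sum>m<2. comp k v * comp m u * A k m)"
    unfolding riem4_def A_def lessThan_2_nat by (simp add: diag swap comp_def algebra_simps)
  also have "\<dots> = - (fst u * snd v - snd u * fst v)\<^sup>2 * A 0 1"
    using assms[folded A_def] unfolding lessThan_2_nat
    by (simp add: comp_def power2_eq_square algebra_simps)
  finally show ?thesis by (simp add: A_def)
qed

theorem theorem1:
  fixes x y :: real and u v :: "real \<times> real"
  assumes "x > 0" and "y > 0"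
    and "fst u * snd v - snd u * fst v \<noteq> 0"
  shows "sectional_curvature (x, y) u v < 0"
proof -
  define q where "q = (x, y)"
  have q: "fst q > 0" "snd q > 0"
    using assms by (simp_all add: q_def)
  define g h k where "g = (\<lambda>m. ln_beta_deriv 2 m q)" and "h = (\<lambda>m. ln_beta_deriv 3 m q)"
    and "k = (\<lambda>m. ln_beta_deriv 4 m q)"
  define R where "R n m = (\<Sum>l<2. riem l 0 1 n q * fisher l m q)" for n m
  have det: "det2 g = fisher_det q" "fisher_det q > 0"
    using fisher_det_pos[OF q] by (simp_all add: g_def fisher_det_eq_det2)
  have "R n m = (\<Sum>l<2. riem_formula g h k l n * g (l + m))" if "n < 2" "m < 2" for n m
    using beta_riem_lowered[OF q that] by (simp add: R_def g_def h_def k_def)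
  then have sym: "R 0 0 = 0" "R 1 1 = 0" "R 1 0 = - R 0 1" and R01: "R 0 1 = det3 g h / (4 * det2 g)"
    using riem_formula_lowered[of g h k] det by simp_all
  from sym[unfolded R_def] have "riem4 q u v = - (fst u * snd v - snd u * fst v)\<^sup>2 * R 0 1"
    unfolding R_def by (rule riem4_eq_lowered)
  then have "sectional_curvature q u v = - R 0 1 / fisher_det q"
    using assms(3) det by (simp add: sectional_curvature_def fisher_gram field_simps)
  also have "\<dots> < 0"
    using R01 det det3_ln_beta_deriv_pos[OF q] by (simp add: g_def h_def)
  finally show ?thesis
    by (simp add: q_def)
qed

end
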